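(* Fix real numbers $r_1,r_2>0$ and integers $i_1,i_2>0$ with $\gcd(i_1,i_2)=1$. Then for all sufficiently large $D$ there exist integers $d_1,d_2>0$ with $\gcd(d_1,d_2)=1$ and $D=i_1d_1+i_2d_2$ such that \[ \Big|d_1-\frac{r_1D}{i_1r_1+i_2r_2}\Big|\le i_2J(D)\quad\text{and}\quad\Big|d_2-\frac{r_2D}{i_1r_1+i_2r_2}\Big|\le i_1J(D). \]
   Context: $J(D)$ is Jacobsthal's function: the minimal integer such that every interval of this length contains an integer coprime to $D$. *)

theory Defs
  imports Complex_Main
begin

definition jacobsthal :: "int \<Rightarrow> nat" where
  "jacobsthal D = (LEAST m. \<forall>a::int. \<exists>k\<in>{a..<a + int m}. coprime k D)"

end

theory Submission
  imports Defs "HOL-Computational_Algebra.Primes"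
begin

text \<open>Fix \<open>u, v\<close> with \<open>u i\<^sub>2 - v i\<^sub>1 = 1\<close>. The solutions of \<open>D = i\<^sub>1 d\<^sub>1 + i\<^sub>2 d\<^sub>2\<close> are
  \<open>d\<^sub>1 = i\<^sub>2 k - v D\<close>, \<open>d\<^sub>2 = u D - i\<^sub>1 k\<close> with \<open>k \<in> \<int>\<close>, a unimodular change of variables, so
  \<open>gcd(d\<^sub>1, d\<^sub>2) = gcd(k, D)\<close>. Taking \<open>k\<close> coprime to \<open>D\<close> among the \<open>J(D)\<close> integers just above
  the real solution moves \<open>d\<^sub>1\<close> up by less than \<open>i\<^sub>2 J(D)\<close> and \<open>d\<^sub>2\<close> down by less than
  \<open>i\<^sub>1 J(D)\<close>, so \<open>d\<^sub>2\<close> stays positive once \<open>J(D) = o(D)\<close>. That follows from Legendre's sieve: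
  an interval of length \<open>m\<close> contains at least \<open>m \<Prod>(1 - 1/p) - 2\<^bsup>\<omega>(D)\<^esup> + 1\<close> integers
  coprime to \<open>D\<close>, and \<open>2\<^bsup>\<omega>(D)\<^esup> \<le> 512 \<surd>D \<Prod>(1 - 1/p)\<close> because \<open>(p - 1)\<^sup>2 / (4p)\<close> is at
  least \<open>1/8\<close> for every prime and at least \<open>1\<close> for \<open>p > 5\<close>; hence \<open>J(D) \<le> 512 \<surd>D + 1\<close>.\<close>

lemma multiples_in_interval:
  fixes p a b :: int
  assumes "p > 0"
  shows "{k\<in>{a..<b}. p dvd k \<and> Q k} =
    (\<lambda>j. p * j) ` {j\<in>{\<lceil>real_of_int a / real_of_int p\<rceil>..<\<lceil>real_of_int b / real_of_int p\<rceil>}. Q (p * j)}"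
proof -
  have lower: "a \<le> p * j \<longleftrightarrow> \<lceil>real_of_int a / real_of_int p\<rceil> \<le> j" for j
  proof -
    have "a \<le> p * j \<longleftrightarrow> real_of_int a \<le> real_of_int j * real_of_int p"
      by (simp flip: of_int_mult add: mult.commute)
    also have "\<dots> \<longleftrightarrow> real_of_int a / real_of_int p \<le> real_of_int j"
      using assms by (simp add: pos_divide_le_eq)
    finally show ?thesis by (simp add: ceiling_le_iff)
  qed
  have upper: "p * j < b \<longleftrightarrow> j < \<lceil>real_of_int b / real_of_int p\<rceil>" for j
  proof -
    have "p * j < b \<longleftrightarrow> real_of_int j * real_of_int p < real_of_int b"
      by (simp flip: of_int_mult add: mult.commute)
    also have "\<dots> \<longleftrightarrow> real_of_int j < real_of_int b / real_of_int p"
      using assms by (simp add: pos_less_divide_eq)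
    finally show ?thesis by (simp add: less_ceiling_iff)
  qed
  show ?thesis
    by (auto simp: lower upper image_iff dvd_def)
qed

lemma card_multiples_sifted:
  fixes S :: "int set" and p a b :: int
  assumes "prime p" "p \<notin> S" "\<forall>q\<in>S. prime q"
  shows "card {k\<in>{a..<b}. p dvd k \<and> (\<forall>q\<in>S. \<not> q dvd k)} =
    card {j\<in>{\<lceil>real_of_int a / real_of_int p\<rceil>..<\<lceil>real_of_int b / real_of_int p\<rceil>}. \<forall>q\<in>S. \<not> q dvd j}"
proof -
  have p: "p > 0" using assms(1) by (simp add: prime_gt_0_int)
  have "q dvd p * j \<longleftrightarrow> q dvd j" if "q \<in> S" for q j
  proof -
    have "\<not> q dvd p" using that assms primes_dvd_imp_eq by metis
    then show ?thesis using that assms(3) prime_dvd_mult_iff by blast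
  qed
  then have "{k\<in>{a..<b}. p dvd k \<and> (\<forall>q\<in>S. \<not> q dvd k)} = (\<lambda>j. p * j) `
      {j\<in>{\<lceil>real_of_int a / real_of_int p\<rceil>..<\<lceil>real_of_int b / real_of_int p\<rceil>}. \<forall>q\<in>S. \<not> q dvd j}"
    using multiples_in_interval[OF p, of a b "\<lambda>k. \<forall>q\<in>S. \<not> q dvd k"] by simp
  then show ?thesis using p by (simp add: card_image inj_on_def)
qed

lemma prod_one_minus_inverse_bounds:
  fixes S :: "int set"
  assumes "\<forall>p\<in>S. 1 \<le> p"
  shows "0 \<le> (\<Prod>p\<in>S. 1 - 1 / real_of_int p)" "(\<Prod>p\<in>S. 1 - 1 / real_of_int p) \<le> 1"
  using assms by (auto intro!: prod_nonneg prod_le_1)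

lemma legendre_sieve:
  fixes S :: "int set" and a b :: int
  assumes "finite S" "\<forall>p\<in>S. prime p" "a \<le> b"
  shows "\<bar>real (card {k\<in>{a..<b}. \<forall>p\<in>S. \<not> p dvd k})
            - real_of_int (b - a) * (\<Prod>p\<in>S. 1 - 1 / real_of_int p)\<bar> \<le> 2 ^ card S - 1"
  using assms
proof (induction S arbitrary: a b rule: finite_induct)
  case empty
  have "{k\<in>{a..<b}. \<forall>p\<in>{}. \<not> p dvd k} = {a..<b}" by auto
  with empty show ?case by simp
next
  case (insert p S)
  define sifted where "sifted a' b' = {k\<in>{a'..<b'}. \<forall>q\<in>S. \<not> q dvd k}" for a' b'
  define P where "P = (\<Prod>q\<in>S. 1 - 1 / real_of_int q)"
  define lo where "lo = \<lceil>real_of_int a / real_of_int p\<rceil>"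
  define hi where "hi = \<lceil>real_of_int b / real_of_int p\<rceil>"
  have p: "prime p" "real_of_int p > 0" using insert.prems by (auto simp: prime_gt_0_int)
  have P: "0 \<le> P" "P \<le> 1"
    unfolding P_def using insert.prems prime_ge_1_int by (intro prod_one_minus_inverse_bounds; auto)+
  have "lo \<le> hi" unfolding lo_def hi_def using insert.prems p
    by (intro ceiling_mono divide_right_mono) auto
  have interval_length: "\<bar>real_of_int (hi - lo) - real_of_int (b - a) / real_of_int p\<bar> \<le> 1"
    unfolding lo_def hi_def by (simp add: diff_divide_distrib) linarith
  have split: "{k\<in>{a..<b}. \<forall>q\<in>insert p S. \<not> q dvd k} =
      sifted a b - {k\<in>{a..<b}. p dvd k \<and> (\<forall>q\<in>S. \<not> q dvd k)}"
    unfolding sifted_def by auto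
  have multiples: "card {k\<in>{a..<b}. p dvd k \<and> (\<forall>q\<in>S. \<not> q dvd k)} = card (sifted lo hi)"
    unfolding sifted_def lo_def hi_def using insert by (intro card_multiples_sifted) auto
  have "finite (sifted a b)" unfolding sifted_def by (rule finite_subset[of _ "{a..<b}"]) auto
  moreover have sub: "{k\<in>{a..<b}. p dvd k \<and> (\<forall>q\<in>S. \<not> q dvd k)} \<subseteq> sifted a b"
    unfolding sifted_def by auto
  ultimately have count: "real (card {k\<in>{a..<b}. \<forall>q\<in>insert p S. \<not> q dvd k}) =
      real (card (sifted a b)) - real (card (sifted lo hi))"
    unfolding split using card_mono[OF _ sub] card_Diff_subset[OF finite_subset[OF sub] sub] multiples
    by (simp add: of_nat_diff)
  have IH: "\<bar>real (card (sifted a b)) - real_of_int (b - a) * P\<bar> \<le> 2 ^ card S - 1"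
    "\<bar>real (card (sifted lo hi)) - real_of_int (hi - lo) * P\<bar> \<le> 2 ^ card S - 1"
    unfolding sifted_def P_def using insert \<open>lo \<le> hi\<close> by auto
  have rounding: "\<bar>(real_of_int (hi - lo) - real_of_int (b - a) / real_of_int p) * P\<bar> \<le> 1"
    using interval_length P by (simp add: abs_mult mult_le_one)
  have decomposition: "real (card {k\<in>{a..<b}. \<forall>q\<in>insert p S. \<not> q dvd k})
      - real_of_int (b - a) * (\<Prod>q\<in>insert p S. 1 - 1 / real_of_int q)
    = (real (card (sifted a b)) - real_of_int (b - a) * P)
      - (real (card (sifted lo hi)) - real_of_int (hi - lo) * P)
      - (real_of_int (hi - lo) - real_of_int (b - a) / real_of_int p) * P"
    unfolding count P_def using insert by (simp add: algebra_simps diff_divide_distrib)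
  show ?case
    unfolding decomposition using IH rounding insert(1,2) by (auto simp: abs_le_iff)
qed

lemma prod_ge_power_card:
  fixes f :: "'a \<Rightarrow> real"
  assumes "finite S" "finite F" "0 \<le> c" "c \<le> 1"
    and "\<And>x. x \<in> S \<Longrightarrow> c \<le> f x" "\<And>x. x \<in> S - F \<Longrightarrow> 1 \<le> f x"
  shows "c ^ card F \<le> (\<Prod>x\<in>S. f x)"
proof -
  have "c ^ card F \<le> c ^ card (S \<inter> F)"
    using assms by (intro power_decreasing card_mono) auto
  also have "\<dots> \<le> (\<Prod>x\<in>S \<inter> F. f x)"
    using prod_mono[of "S \<inter> F" "\<lambda>_. c" f] assms by simp
  also have "\<dots> \<le> (\<Prod>x\<in>S \<inter> F. f x) * (\<Prod>x\<in>S - F. f x)"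
  proof -
    have "0 \<le> (\<Prod>x\<in>S \<inter> F. f x)"
      using order_trans[OF assms(3,5)] by (auto intro: prod_nonneg)
    moreover have "1 \<le> (\<Prod>x\<in>S - F. f x)" using assms(6) by (rule prod_ge_1)
    ultimately show ?thesis using mult_left_mono[of 1] by fastforce
  qed
  also have "\<dots> = (\<Prod>x\<in>S. f x)"
    using prod.Int_Diff[OF assms(1), of f F] by simp
  finally show ?thesis .
qed

lemma sq_pred_div_four_prime_bounds:
  fixes p :: int
  assumes "prime p"
  shows "1 / 8 \<le> (real_of_int p - 1)\<^sup>2 / (4 * real_of_int p)"
    and "5 < p \<Longrightarrow> 1 \<le> (real_of_int p - 1)\<^sup>2 / (4 * real_of_int p)"
proof -
  have p: "real_of_int p \<ge> 2" using prime_ge_2_int[OF assms] by simp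
  then have "0 \<le> (2 * real_of_int p - 1) * (real_of_int p - 2)" by simp
  then have "4 * real_of_int p \<le> 8 * (real_of_int p - 1)\<^sup>2"
    by (simp add: power2_eq_square algebra_simps)
  then show "1 / 8 \<le> (real_of_int p - 1)\<^sup>2 / (4 * real_of_int p)"
    using p by (simp add: field_simps)
  assume "5 < p"
  then have "0 \<le> (real_of_int p - 6) * real_of_int p" using p by simp
  then have "4 * real_of_int p \<le> (real_of_int p - 1)\<^sup>2"
    by (simp add: power2_eq_square algebra_simps)
  then show "1 \<le> (real_of_int p - 1)\<^sup>2 / (4 * real_of_int p)"
    using p by (simp add: field_simps)
qed

lemma prod_prime_factors_le:
  fixes D :: int
  assumes "D > 0"
  shows "(\<Prod>p\<in>prime_factors D. p) \<le> D"
proof -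
  have "(\<Prod>p\<in>prime_factors D. p) \<le> (\<Prod>p\<in>prime_factors D. p ^ multiplicity p D)"
  proof (rule prod_mono)
    fix p assume "p \<in> prime_factors D"
    then have "prime p" "multiplicity p D > 0"
      using assms by (auto simp: prime_factors_multiplicity)
    then show "0 \<le> p \<and> p \<le> p ^ multiplicity p D"
      by (simp add: prime_ge_0_int prime_ge_1_int self_le_power)
  qed
  also have "\<dots> = D" using prod_prime_factors[of D] assms by simp
  finally show ?thesis .
qed

lemma two_pow_card_prime_factors_le:
  fixes D :: int
  assumes "D > 0"
  shows "2 ^ card (prime_factors D)
    \<le> 512 * sqrt (real_of_int D) * (\<Prod>p\<in>prime_factors D. 1 - 1 / real_of_int p)"
proof -
  define S where "S = prime_factors D"
  define P where "P = (\<Prod>p\<in>S. 1 - 1 / real_of_int p)"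
  have primes: "prime p" "real_of_int p > 0" if "p \<in> S" for p
    using that in_prime_factors_imp_prime prime_gt_0_int unfolding S_def by force+
  have "(1 / 8) ^ card {0..5::int} \<le> (\<Prod>p\<in>S. (real_of_int p - 1)\<^sup>2 / (4 * real_of_int p))"
  proof (rule prod_ge_power_card)
    show "1 / 8 \<le> (real_of_int p - 1)\<^sup>2 / (4 * real_of_int p)" if "p \<in> S" for p
      using that primes by (intro sq_pred_div_four_prime_bounds(1))
    show "1 \<le> (real_of_int p - 1)\<^sup>2 / (4 * real_of_int p)" if "p \<in> S - {0..5}" for p
      using that primes[of p] by (intro sq_pred_div_four_prime_bounds(2)) auto
  qed (auto simp: S_def)
  also have "\<dots> = (\<Prod>p\<in>S. (1 - 1 / real_of_int p)\<^sup>2 * real_of_int p / 4)"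
    using primes by (intro prod.cong) (auto simp: field_simps power2_eq_square)
  also have "\<dots> = P\<^sup>2 * real_of_int (\<Prod>p\<in>S. p) / 4 ^ card S"
    by (simp add: P_def prod_dividef prod.distrib prod_power_distrib)
  also have "\<dots> \<le> P\<^sup>2 * real_of_int D / 4 ^ card S"
    using prod_prime_factors_le[OF assms] unfolding S_def
    by (intro divide_right_mono mult_left_mono) (auto simp del: of_int_prod)
  finally have "(1 / 8) ^ card {0..5::int} \<le> P\<^sup>2 * real_of_int D / 4 ^ card S" .
  moreover have "(2 ^ card S)\<^sup>2 = (4 :: real) ^ card S"
    unfolding power2_eq_square power_mult_distrib[symmetric] by simp
  ultimately have "(2 ^ card S)\<^sup>2 \<le> (512 * sqrt (real_of_int D) * P)\<^sup>2"
    using assms by (simp add: field_simps power_mult_distrib)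
  moreover have "0 \<le> 512 * sqrt (real_of_int D) * P"
    unfolding P_def using primes prime_ge_1_int assms by (simp add: prod_one_minus_inverse_bounds)
  ultimately have "2 ^ card S \<le> 512 * sqrt (real_of_int D) * P" by (rule power2_le_imp_le)
  then show ?thesis by (simp add: S_def P_def)
qed

lemma coprime_if_no_prime_factor_dvd:
  fixes k D :: int
  assumes "D \<noteq> 0" "\<forall>p\<in>prime_factors D. \<not> p dvd k"
  shows "coprime k D"
proof (rule ccontr)
  assume "\<not> coprime k D"
  then obtain c where c: "c dvd k" "c dvd D" "\<not> is_unit c" by (rule not_coprimeE)
  moreover have "c \<noteq> 0" using c(2) assms(1) by auto
  ultimately obtain q where "prime q" "q dvd k" "q dvd D"
    using prime_divisor_exists dvd_trans by metis
  then show False using assms by (auto simp: prime_factors_dvd)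
qed

lemma jacobsthal_le:
  assumes "\<forall>a. \<exists>k\<in>{a..<a + int m}. coprime k D"
  shows "jacobsthal D \<le> m"
  unfolding jacobsthal_def using assms by (rule Least_le)

lemma jacobsthal_exists_coprime:
  fixes D :: int
  assumes "D > 0"
  shows "\<exists>k\<in>{a..<a + int (jacobsthal D)}. coprime k D"
proof -
  have witness: "\<exists>k\<in>{a..<a + int (nat D)}. coprime k D" for a
  proof
    define k where "k = a + (1 - a) mod D"
    have "k mod D = 1 mod D" unfolding k_def by (simp only: mod_add_right_eq) simp
    then show "coprime k D"
      using assms by (metis coprime_1_left coprime_mod_left_iff less_irrefl)
    show "k \<in> {a..<a + int (nat D)}" using assms by (simp add: k_def)
  qed
  have "\<forall>a. \<exists>k\<in>{a..<a + int (jacobsthal D)}. coprime k D"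
    unfolding jacobsthal_def by (rule LeastI[of _ "nat D"]) (use witness in blast)
  then show ?thesis by blast
qed

lemma jacobsthal_le_by_sieve:
  fixes D :: int and m :: nat
  assumes "D > 0"
    and "2 ^ card (prime_factors D) \<le> real m * (\<Prod>p\<in>prime_factors D. 1 - 1 / real_of_int p)"
  shows "jacobsthal D \<le> m"
proof (rule jacobsthal_le, rule allI)
  fix a
  have "\<forall>p\<in>prime_factors D. prime p" using in_prime_factors_imp_prime by blast
  then have "\<bar>real (card {k\<in>{a..<a + int m}. \<forall>p\<in>prime_factors D. \<not> p dvd k})
      - real m * (\<Prod>p\<in>prime_factors D. 1 - 1 / real_of_int p)\<bar> \<le> 2 ^ card (prime_factors D) - 1"
    using legendre_sieve[of "prime_factors D" a "a + int m"] by simp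
  then have "card {k\<in>{a..<a + int m}. \<forall>p\<in>prime_factors D. \<not> p dvd k} > 0"
    using assms(2) by linarith
  then obtain k where k: "k \<in> {a..<a + int m}" "\<forall>p\<in>prime_factors D. \<not> p dvd k"
    by (auto simp: card_gt_0_iff)
  have "coprime k D" using assms(1) k(2) by (intro coprime_if_no_prime_factor_dvd) auto
  with k(1) show "\<exists>k\<in>{a..<a + int m}. coprime k D" by blast
qed

lemma jacobsthal_le_sqrt:
  fixes D :: int
  assumes "D > 0"
  shows "real (jacobsthal D) \<le> 512 * sqrt (real_of_int D) + 1"
proof -
  define P where "P = (\<Prod>p\<in>prime_factors D. 1 - 1 / real_of_int p)"
  define m where "m = nat \<lceil>512 * sqrt (real_of_int D)\<rceil>"
  have "0 \<le> 512 * sqrt (real_of_int D)" using assms by simp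
  then have "real m = real_of_int \<lceil>512 * sqrt (real_of_int D)\<rceil>"
    unfolding m_def by (intro of_nat_nat) linarith
  then have m: "512 * sqrt (real_of_int D) \<le> real m" "real m \<le> 512 * sqrt (real_of_int D) + 1"
    by linarith+
  have "0 \<le> P" unfolding P_def
    using in_prime_factors_imp_prime prime_ge_1_int by (intro prod_one_minus_inverse_bounds) blast
  have "2 ^ card (prime_factors D) \<le> 512 * sqrt (real_of_int D) * P"
    using two_pow_card_prime_factors_le assms unfolding P_def by simp
  also have "\<dots> \<le> real m * P"
    using m \<open>0 \<le> P\<close> by (intro mult_right_mono) auto
  finally have "jacobsthal D \<le> m"
    using assms by (intro jacobsthal_le_by_sieve) (auto simp: P_def)
  then show ?thesis using m by linarith
qed

lemma jacobsthal_eventually_le: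
  fixes \<rho> :: real
  assumes "\<rho> > 0"
  shows "eventually (\<lambda>D. real (jacobsthal D) \<le> \<rho> * real_of_int D) at_top"
  using eventually_ge_at_top[of "max 1 \<lceil>(513 / \<rho>)\<^sup>2\<rceil>"]
proof (rule eventually_mono)
  fix D :: int
  assume "max 1 \<lceil>(513 / \<rho>)\<^sup>2\<rceil> \<le> D"
  then have D: "1 \<le> real_of_int D" "(513 / \<rho>)\<^sup>2 \<le> real_of_int D"
    by (simp_all add: ceiling_le_iff)
  then have "1 \<le> sqrt (real_of_int D)" "513 / \<rho> \<le> sqrt (real_of_int D)"
    by (auto intro: real_le_rsqrt)
  then have "512 * sqrt (real_of_int D) + 1 \<le> 513 * sqrt (real_of_int D)"
    and "513 * sqrt (real_of_int D) \<le> \<rho> * sqrt (real_of_int D) * sqrt (real_of_int D)"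
    using assms by (auto intro!: mult_right_mono simp: pos_divide_le_eq mult.commute)
  moreover have "\<rho> * sqrt (real_of_int D) * sqrt (real_of_int D) = \<rho> * real_of_int D"
    using D by (simp add: mult.assoc)
  moreover have "real (jacobsthal D) \<le> 512 * sqrt (real_of_int D) + 1"
    using D by (intro jacobsthal_le_sqrt) simp
  ultimately show "real (jacobsthal D) \<le> \<rho> * real_of_int D" by linarith
qed

lemma coprime_unimodular_transform:
  fixes u v i1 i2 k D :: int
  assumes "u * i2 - v * i1 = 1"
  shows "coprime (i2 * k - v * D) (u * D - i1 * k) \<longleftrightarrow> coprime k D"
proof -
  define d1 d2 where "d1 = i2 * k - v * D" and "d2 = u * D - i1 * k"
  have "u * d1 + v * d2 = k * (u * i2 - v * i1)" "i1 * d1 + i2 * d2 = D * (u * i2 - v * i1)"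
    unfolding d1_def d2_def by (simp_all add: algebra_simps)
  then have k: "k = u * d1 + v * d2" and D: "D = i1 * d1 + i2 * d2"
    using assms by simp_all
  show ?thesis
    unfolding d1_def[symmetric] d2_def[symmetric]
  proof
    assume "coprime d1 d2"
    show "coprime k D"
    proof (rule coprimeI)
      fix c assume "c dvd k" "c dvd D"
      then have "c dvd d1" "c dvd d2" by (simp_all add: d1_def d2_def)
      then show "is_unit c" using \<open>coprime d1 d2\<close> coprime_common_divisor by blast
    qed
  next
    assume "coprime k D"
    show "coprime d1 d2"
    proof (rule coprimeI)
      fix c assume "c dvd d1" "c dvd d2"
      then have "c dvd k" "c dvd D" by (simp_all add: k D)
      then show "is_unit c" using \<open>coprime k D\<close> coprime_common_divisor by blast
    qed
  qed
qed

lemma coprime_decomposition_near: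
  fixes i1 i2 D :: int and x y :: real and J :: nat
  assumes "i1 > 0" "i2 > 0" "coprime i1 i2"
    and J: "\<forall>a. \<exists>k\<in>{a..<a + int J}. coprime k D"
    and xy: "real_of_int i1 * x + real_of_int i2 * y = real_of_int D"
    and "x > 0" "real_of_int i1 * real J \<le> y"
  shows "\<exists>d1 d2. d1 > 0 \<and> d2 > 0 \<and> coprime d1 d2 \<and> D = i1 * d1 + i2 * d2 \<and>
    \<bar>real_of_int d1 - x\<bar> \<le> real_of_int i2 * real J \<and>
    \<bar>real_of_int d2 - y\<bar> \<le> real_of_int i1 * real J"
proof -
  obtain s t where "s * i1 + t * i2 = 1"
    using bezout_int[of i1 i2] assms(3) by auto
  then have uv: "t * i2 - (- s) * i1 = 1" by simp
  define c where "c = (x - real_of_int (s * D)) / real_of_int i2"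
  obtain k where k: "k \<in> {\<lceil>c\<rceil>..<\<lceil>c\<rceil> + int J}" "coprime k D" using J by blast
  define \<delta> where "\<delta> = real_of_int k - c"
  have "\<lceil>c\<rceil> \<le> k" "k < \<lceil>c\<rceil> + int J" using k(1) by auto
  then have \<delta>: "0 \<le> \<delta>" "\<delta> < real J" unfolding \<delta>_def by linarith+
  define d1 d2 where "d1 = i2 * k - (- s) * D" and "d2 = t * D - i1 * k"
  have "i1 * d1 + i2 * d2 = D * (t * i2 - (- s) * i1)"
    unfolding d1_def d2_def by (simp add: algebra_simps)
  then have D: "D = i1 * d1 + i2 * d2" using uv by simp
  have d1: "real_of_int d1 - x = real_of_int i2 * \<delta>"
    using assms(2) unfolding d1_def \<delta>_def c_def by (simp add: field_simps)
  have "real_of_int i2 * (real_of_int d2 - y) = real_of_int i2 * (- real_of_int i1 * \<delta>)"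
    using xy arg_cong[OF D, of real_of_int] d1 by (simp add: algebra_simps)
  then have d2: "real_of_int d2 - y = - real_of_int i1 * \<delta>"
    using assms(2) by (subst (asm) mult_left_cancel) auto
  show ?thesis
  proof (intro exI conjI)
    show "coprime d1 d2"
      using coprime_unimodular_transform[OF uv] k(2) unfolding d1_def d2_def by simp
    show "\<bar>real_of_int d1 - x\<bar> \<le> real_of_int i2 * real J"
      using d1 \<delta> assms(2) by (simp add: abs_mult mult_left_mono)
    show "\<bar>real_of_int d2 - y\<bar> \<le> real_of_int i1 * real J"
      using d2 \<delta> assms(1) by (simp add: abs_mult mult_left_mono)
    have "0 \<le> real_of_int i2 * \<delta>" using \<delta> assms(2) by simp
    then show "d1 > 0" using d1 \<open>x > 0\<close> by linarith
    have "real_of_int i1 * \<delta> < real_of_int i1 * real J" using \<delta> assms(1) by simp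
    then have "0 < real_of_int d2" using d2 assms(7) by linarith
    then show "d2 > 0" by simp
  qed (fact D)
qed

theorem lemma3p3:
  fixes r1 r2 :: real and i1 i2 :: int
  assumes "r1 > 0" "r2 > 0" "i1 > 0" "i2 > 0" "coprime i1 i2"
  shows "\<exists>D0::int. \<forall>D\<ge>D0. \<exists>d1 d2::int. d1 > 0 \<and> d2 > 0 \<and> coprime d1 d2 \<and>
           D = i1 * d1 + i2 * d2 \<and>
           \<bar>real_of_int d1 - r1 * real_of_int D / (real_of_int i1 * r1 + real_of_int i2 * r2)\<bar>
              \<le> real_of_int i2 * real (jacobsthal D) \<and>
           \<bar>real_of_int d2 - r2 * real_of_int D / (real_of_int i1 * r1 + real_of_int i2 * r2)\<bar>
              \<le> real_of_int i1 * real (jacobsthal D)"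
proof -
  define s where "s = real_of_int i1 * r1 + real_of_int i2 * r2"
  have "s > 0" unfolding s_def using assms by (simp add: add_pos_pos)
  then have "eventually (\<lambda>D. real (jacobsthal D) \<le> r2 / (real_of_int i1 * s) * real_of_int D
      \<and> 1 \<le> D) at_top"
    using assms by (intro eventually_conj jacobsthal_eventually_le eventually_ge_at_top) auto
  then obtain D0 where D0: "\<And>D. D \<ge> D0 \<Longrightarrow>
      real (jacobsthal D) \<le> r2 / (real_of_int i1 * s) * real_of_int D \<and> 1 \<le> D"
    by (auto simp: eventually_at_top_linorder)
  show ?thesis
    unfolding s_def[symmetric]
  proof (rule exI[of _ D0], intro allI impI)
    fix D assume "D0 \<le> D"
    then have "real_of_int i1 * real (jacobsthal D) \<le> r2 * real_of_int D / s" "1 \<le> D"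
      using D0[of D] assms \<open>s > 0\<close> by (auto simp: field_simps)
    moreover have "real_of_int i1 * (r1 * real_of_int D / s) + real_of_int i2 * (r2 * real_of_int D / s)
        = real_of_int D"
      using \<open>s > 0\<close> by (simp add: field_simps) (simp add: s_def algebra_simps)
    ultimately show "\<exists>d1 d2. 0 < d1 \<and> 0 < d2 \<and> coprime d1 d2 \<and> D = i1 * d1 + i2 * d2 \<and>
        \<bar>real_of_int d1 - r1 * real_of_int D / s\<bar> \<le> real_of_int i2 * real (jacobsthal D) \<and>
        \<bar>real_of_int d2 - r2 * real_of_int D / s\<bar> \<le> real_of_int i1 * real (jacobsthal D)"
      using assms \<open>s > 0\<close> jacobsthal_exists_coprime[of D]
      by (intro coprime_decomposition_near) auto
  qed
qed

end
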